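(* Let $f,g:\mathbb{R}\to\mathbb{R}$ be $\mathcal{C}^2$ functions such that $f''(u)\ge c_0$ and $g''(u)\ge c_0$ for some $c_0>0$ and all $u\in\mathbb{R}$, and $f(u)>g(u)$ for all $u\in\mathbb{R}$. Let $u^->u^+$ and $\theta^-,\theta^+\in\{0,1\}$ with $\theta^-\neq\theta^+$, and let $$\lambda=\frac{[\theta^+f(u^+)+(1-\theta^+)g(u^+)]-[\theta^-f(u^-)+(1-\theta^-)g(u^-)]}{u^+-u^-}.$$ Then the jump satisfies the Lax admissibility conditions $$\theta^+f'(u^+)+(1-\theta^+)g'(u^+)\;\le\;\lambda\;\le\;\theta^-f'(u^-)+(1-\theta^-)g'(u^-)$$ in each of the following two cases: (1) $\theta^-=1$, $\theta^+=0$ and $u^-\ge u^*$, where $(u^*,f(u^* ))$ is the unique point with $u^*>u^+$ at which a straight line through $(u^+,g(u^+))$ touches the graph of $f$ tangentially; (2) $\theta^-=0$, $\theta^+=1$ and $u^+\le v^*$, where $(v^*,f(v^* ))$ is the unique point with $v^*<u^-$ at which a straight line through $(u^-,g(u^-))$ touches the graph of $f$ tangentially.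
   Context: This concerns jumps of weak solutions of the conservation law $u_t+[\theta(u_x)f(u)+(1-\theta(u_x))g(u)]_x=0$, where $\theta(s)=1$ for $s>0$ and $\theta(s)=0$ for $s<0$. A jump connects a left state $(u^-,\theta^-)$ to a right state $(u^+,\theta^+)$, traveling with the Rankine–Hugoniot speed $\lambda$ given in the claim. *)

theory Defs
  imports "HOL-Analysis.Analysis"
begin

definition flux :: "(real \<Rightarrow> real) \<Rightarrow> (real \<Rightarrow> real) \<Rightarrow> real \<Rightarrow> real \<Rightarrow> real" where
  "flux f g th u = th * f u + (1 - th) * g u"

definition rh_speed :: "(real \<Rightarrow> real) \<Rightarrow> (real \<Rightarrow> real) \<Rightarrow> real \<Rightarrow> real \<Rightarrow> real \<Rightarrow> real \<Rightarrow> real" where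
  "rh_speed f g um thetam up thetap = (flux f g thetap up - flux f g thetam um) / (up - um)"

end

theory Submission
  imports Defs
begin

text \<open>
  Both inequalities follow from convexity alone. The bound involving g' holds because g lies
  above its tangent lines and below f. For the bound involving f', look at the value at a fixed
  abscissa p of the tangent line to f at u: by convexity it increases in u for u \<le> p and
  decreases for u \<ge> p. Taking p = u+ (resp. p = u-), this value equals g p at the tangency
  point u* (resp. v*), and u- lies beyond u* (resp. u+ lies before v*).
\<close>

lemma mono_if_deriv_nonneg:
  fixes F F' :: "real \<Rightarrow> real"
  assumes "\<And>u. (F has_real_derivative F' u) (at u)" and "\<And>u. F' u \<ge> 0"
  shows "mono F"
  by (rule monoI, rule deriv_nonneg_imp_mono[where g' = F']) (use assms in auto)

lemma above_tangent_if_mono_deriv: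
  fixes f f' :: "real \<Rightarrow> real"
  assumes deriv: "\<And>u. (f has_real_derivative f' u) (at u)" and "mono f'"
  shows "f x + f' x * (y - x) \<le> f y"
proof -
  have "convex_on UNIV f"
    by (rule convex_on_realI[where f' = f']) (use deriv \<open>mono f'\<close> in \<open>auto dest: monoD\<close>)
  then have "f' x * (y - x) \<le> f y - f x"
    by (rule convex_on_imp_above_tangent[where f' = "f' x"]) (auto intro: deriv)
  then show ?thesis by simp
qed

lemma tangent_value_antimono_right:
  fixes f f' :: "real \<Rightarrow> real"
  assumes "\<And>u. (f has_real_derivative f' u) (at u)" and "mono f'"
    and "p \<le> a" "a \<le> b"
  shows "f b + f' b * (p - b) \<le> f a + f' a * (p - a)"
proof -
  have "f b + f' b * (a - b) \<le> f a"
    using above_tangent_if_mono_deriv[OF assms(1,2)] .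
  moreover have "f' b * (p - a) \<le> f' a * (p - a)"
    using \<open>mono f'\<close> assms(3,4) by (intro mult_right_mono_neg) (auto dest: monoD)
  ultimately show ?thesis by (simp add: algebra_simps)
qed

lemma tangent_value_mono_left:
  fixes f f' :: "real \<Rightarrow> real"
  assumes "\<And>u. (f has_real_derivative f' u) (at u)" and "mono f'"
    and "b \<le> a" "a \<le> p"
  shows "f b + f' b * (p - b) \<le> f a + f' a * (p - a)"
proof -
  have "f b + f' b * (a - b) \<le> f a"
    using above_tangent_if_mono_deriv[OF assms(1,2)] .
  moreover have "f' b * (p - a) \<le> f' a * (p - a)"
    using \<open>mono f'\<close> assms(3,4) by (intro mult_right_mono) (auto dest: monoD)
  ultimately show ?thesis by (simp add: algebra_simps)
qed

lemma rh_speed_f_to_g: "rh_speed f g um 1 up 0 = (f um - g up) / (um - up)"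
  by (simp add: rh_speed_def flux_def) (metis minus_diff_eq minus_divide_divide)

lemma rh_speed_g_to_f: "rh_speed f g um 0 up 1 = (g um - f up) / (um - up)"
  by (simp add: rh_speed_def flux_def) (metis minus_diff_eq minus_divide_divide)

lemma lax_jump_f_to_g:
  fixes f g f' g' :: "real \<Rightarrow> real"
  assumes f1: "\<And>u. (f has_real_derivative f' u) (at u)" and "mono f'"
    and g1: "\<And>u. (g has_real_derivative g' u) (at u)" and "mono g'"
    and "g um \<le> f um" and "up < um"
    and "up \<le> us" and tangent: "f us - g up = f' us * (us - up)" and "us \<le> um"
  shows "g' up \<le> rh_speed f g um 1 up 0 \<and> rh_speed f g um 1 up 0 \<le> f' um"
proof -
  have "g up + g' up * (um - up) \<le> g um"
    by (rule above_tangent_if_mono_deriv[OF g1 \<open>mono g'\<close>])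
  then have lower: "g' up * (um - up) \<le> f um - g up"
    using \<open>g um \<le> f um\<close> by linarith
  have "f um + f' um * (up - um) \<le> f us + f' us * (up - us)"
    by (rule tangent_value_antimono_right[OF f1 \<open>mono f'\<close> \<open>up \<le> us\<close> \<open>us \<le> um\<close>])
  then have upper: "f um - g up \<le> f' um * (um - up)"
    using tangent by (simp add: algebra_simps)
  show ?thesis
    using lower upper \<open>up < um\<close> by (simp add: rh_speed_f_to_g pos_le_divide_eq pos_divide_le_eq)
qed

lemma lax_jump_g_to_f:
  fixes f g f' g' :: "real \<Rightarrow> real"
  assumes f1: "\<And>u. (f has_real_derivative f' u) (at u)" and "mono f'"
    and g1: "\<And>u. (g has_real_derivative g' u) (at u)" and "mono g'"
    and "g up \<le> f up" and "up < um"
    and "vs \<le> um" and tangent: "f vs - g um = f' vs * (vs - um)" and "up \<le> vs"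
  shows "f' up \<le> rh_speed f g um 0 up 1 \<and> rh_speed f g um 0 up 1 \<le> g' um"
proof -
  have "f up + f' up * (um - up) \<le> f vs + f' vs * (um - vs)"
    by (rule tangent_value_mono_left[OF f1 \<open>mono f'\<close> \<open>up \<le> vs\<close> \<open>vs \<le> um\<close>])
  then have lower: "f' up * (um - up) \<le> g um - f up"
    using tangent by (simp add: algebra_simps)
  have "g um + g' um * (up - um) \<le> g up"
    by (rule above_tangent_if_mono_deriv[OF g1 \<open>mono g'\<close>])
  then have upper: "g um - f up \<le> g' um * (um - up)"
    using \<open>g up \<le> f up\<close> by (simp add: algebra_simps)
  show ?thesis
    using lower upper \<open>up < um\<close> by (simp add: rh_speed_g_to_f pos_le_divide_eq pos_divide_le_eq)
qed

text \<open>
  Only the monotonicity of f' and g' is used: the continuity of f'' and g'', the uniform bound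
  c0, and the hypotheses on thetam and thetap (implied by the case split) are not needed.
\<close>

theorem lemma2p2:
  fixes f g f' g' f'' g'' :: "real \<Rightarrow> real" and c0 um up thetam thetap :: real
  assumes f1: "\<And>u. (f has_real_derivative f' u) (at u)"
      and f2: "\<And>u. (f' has_real_derivative f'' u) (at u)"
      and f2c: "continuous_on UNIV f''"
      and g1: "\<And>u. (g has_real_derivative g' u) (at u)"
      and g2: "\<And>u. (g' has_real_derivative g'' u) (at u)"
      and g2c: "continuous_on UNIV g''"
      and c0: "c0 > 0"
      and fconv: "\<And>u. f'' u \<ge> c0"
      and gconv: "\<And>u. g'' u \<ge> c0"
      and fg: "\<And>u. f u > g u"
      and ord: "um > up"
      and thetam: "thetam \<in> {0, 1}" and thetap: "thetap \<in> {0, 1}" and thne: "thetam \<noteq> thetap"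
      and cases:
        "(thetam = 1 \<and> thetap = 0 \<and>
            (\<exists>ustar. ustar > up \<and> f ustar - g up = f' ustar * (ustar - up) \<and> um \<ge> ustar))
       \<or> (thetam = 0 \<and> thetap = 1 \<and>
            (\<exists>vstar. vstar < um \<and> f vstar - g um = f' vstar * (vstar - um) \<and> up \<le> vstar))"
  shows "thetap * f' up + (1 - thetap) * g' up \<le> rh_speed f g um thetam up thetap
       \<and> rh_speed f g um thetam up thetap \<le> thetam * f' um + (1 - thetam) * g' um"
proof -
  have "mono f'"
    by (rule mono_if_deriv_nonneg[OF f2], rule order.trans[OF less_imp_le[OF c0] fconv])
  have "mono g'"
    by (rule mono_if_deriv_nonneg[OF g2], rule order.trans[OF less_imp_le[OF c0] gconv])
  from cases show ?thesis
  proof (elim disjE conjE exE)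
    fix us
    assume "thetam = 1" "thetap = 0" "us > up" "f us - g up = f' us * (us - up)" "um \<ge> us"
    then show ?thesis
      using lax_jump_f_to_g[OF f1 \<open>mono f'\<close> g1 \<open>mono g'\<close>, of um up us] fg[of um] ord by simp
  next
    fix vs
    assume "thetam = 0" "thetap = 1" "vs < um" "f vs - g um = f' vs * (vs - um)" "up \<le> vs"
    then show ?thesis
      using lax_jump_g_to_f[OF f1 \<open>mono f'\<close> g1 \<open>mono g'\<close>, of up um vs] fg[of up] ord by simp
  qed
qed

end
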